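(* The compact wedges $\mathcal{S}_0$ and $\mathcal{S}_1$ are homotopy equivalent to the bouquets $\mathcal{WS}_0$ and $\mathcal{WS}_1$, respectively.
   Context: Let $n\ge1$, $\mathcal{S}=S^n$. $\mathcal{S}_0=\bigvee_{j\ge1}\mathcal{S}_0(j)$ is a compact (Hawaiian-earring type) wedge in $\mathbb{R}^{2n+2}$ of countably many copies $\mathcal{S}_0(j)$ of $S^n\times S^n$ at a common basepoint (the origin), factors meeting pairwise only at the basepoint, diameters tending to $0$. $\mathcal{S}_1=\bigvee_{j\ge1}\mathcal{S}_1(j)$ is the analogous compact wedge with $\mathcal{S}_1(1)$ a copy of $S^n$ and $\mathcal{S}_1(j)\cong S^n\times S^n$ for $j\ge2$. $\mathcal{WS}_0$ (resp. $\mathcal{WS}_1$) is the compact subspace of $\mathbb{R}^{2n+2}$ obtained as follows: take an arc $\bar A$ containing points $p_1,p_2,\dots$ in order, converging to an endpoint $p_\infty$ of $\bar A$, with $a_i$ the subarc from $p_i$ to $p_{i+1}$ and $\bar A=\bigcup_i a_i\cup\{p_\infty\}$; at each $p_j$ attach a copy of the factor $\mathcal{S}_0(j)$ (resp. $\mathcal{S}_1(j)$) meeting $\bar A$ only at $p_j$, the attached factors pairwise disjoint and with diameters tending to $0$. *)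

theory Defs
  imports "HOL-Analysis.Analysis"
begin

text \<open>A compact (Hawaiian-earring type) wedge, at the origin, of sets K j (j \<ge> 1),
  where K j is required to be a copy of the j-th factor (predicate F j).\<close>
definition compact_wedge :: "(nat \<Rightarrow> 'a::euclidean_space set \<Rightarrow> bool) \<Rightarrow> 'a set \<Rightarrow> bool" where
  "compact_wedge F W \<longleftrightarrow>
     (\<exists>K :: nat \<Rightarrow> 'a set.
        (\<forall>j\<ge>1. F j (K j) \<and> 0 \<in> K j) \<and>
        (\<forall>i\<ge>1. \<forall>j\<ge>1. i \<noteq> j \<longrightarrow> K i \<inter> K j = {0}) \<and>
        (\<lambda>j. diameter (K j)) \<longlonglongrightarrow> 0 \<and>
        W = (\<Union>j\<in>{1..}. K j))"

text \<open>The bouquet along an arc: arc g from p_1 = g(t 1) = g 0 to p_inf = g 1,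
  points p_j = g (t j) in order converging to g 1; at p_j a copy L j of the
  j-th factor is attached, meeting the arc only at p_j.\<close>
definition arc_bouquet :: "(nat \<Rightarrow> 'a::euclidean_space set \<Rightarrow> bool) \<Rightarrow> 'a set \<Rightarrow> bool" where
  "arc_bouquet F W \<longleftrightarrow>
     (\<exists>(g :: real \<Rightarrow> 'a) (t :: nat \<Rightarrow> real) (L :: nat \<Rightarrow> 'a set).
        arc g \<and> t 1 = 0 \<and> (\<forall>i\<ge>1. t i < t (Suc i)) \<and> t \<longlonglongrightarrow> 1 \<and>
        (\<forall>j\<ge>1. F j (L j) \<and> L j \<inter> path_image g = {g (t j)}) \<and>
        (\<forall>i\<ge>1. \<forall>j\<ge>1. i \<noteq> j \<longrightarrow> L i \<inter> L j = {}) \<and>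
        (\<lambda>j. diameter (L j)) \<longlonglongrightarrow> 0 \<and>
        W = path_image g \<union> (\<Union>j\<in>{1..}. L j))"

end

theory Submission
  imports Defs
begin

text \<open>Every factor of the wedge is compact, topologically homogeneous and has a conical
  neighbourhood of the wedge point coming from a convex chart: a radius \<open>\<rho>\<close> vanishing at the
  wedge point and maps \<open>C a\<close> crushing \<open>\<rho> \<le> a\<close> to the wedge point while stretching the rest over
  the factor. The map from the wedge to the bouquet sends the part \<open>\<rho> < 1/2\<close> of the \<open>j\<close>-th
  factor along the arc from \<open>p\<^sub>\<infinity>\<close> to \<open>p\<^sub>j\<close> and the rest, via \<open>C (1/2)\<close>, onto the copy
  attached at \<open>p\<^sub>j\<close>; the map back crushes the arc to the wedge point. Letting \<open>a\<close> run from
  \<open>1/2\<close> to \<open>0\<close> gives both homotopies to the identity, and continuity at the wedge point and at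
  \<open>p\<^sub>\<infinity>\<close> comes from the diameters of the factors and of the arc tails tending to \<open>0\<close>.\<close>

section \<open>Gluing continuous maps along a shrinking family\<close>

context
  fixes h :: "'x::metric_space \<Rightarrow> 'y::metric_space" and X Z :: "'x set"
    and I :: "nat set" and P :: "nat \<Rightarrow> 'x set"
  assumes X: "X = Z \<union> (\<Union>j\<in>I. P j)"
    and closed_Z: "closed Z" and closed_P: "\<And>j. j \<in> I \<Longrightarrow> closed (P j)"
    and cont_Z: "continuous_on Z h" and cont_P: "\<And>j. j \<in> I \<Longrightarrow> continuous_on (P j) h"
    and shrinking: "\<And>e. e > 0 \<Longrightarrow> \<forall>\<^sub>F j in sequentially. j \<in> I \<longrightarrow>
                      (\<forall>x\<in>P j. \<exists>z\<in>Z. dist x z < e \<and> dist (h x) (h z) < e)"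
begin

lemma continuous_on_Union_shrinking_initial:
  "continuous_on (Z \<union> (\<Union>j\<in>{j\<in>I. j < m}. P j)) h"
  using closed_Z closed_P cont_Z cont_P
  by (intro continuous_on_closed_Un continuous_on_closed_Union closed_UN) auto

lemma Union_shrinking_tail_near:
  assumes "e > 0"
  obtains m where "\<And>j x. j \<in> I \<Longrightarrow> x \<in> X \<Longrightarrow> x \<notin> Z \<union> (\<Union>j\<in>{j\<in>I. j < m}. P j) \<Longrightarrow>
    x \<in> P j \<Longrightarrow> \<exists>z\<in>Z. dist x z < e \<and> dist (h x) (h z) < e"
  using shrinking[OF assms] unfolding eventually_sequentially by (metis mem_Collect_eq UN_I not_le Un_iff)

lemma continuous_within_Union_shrinking_Z:
  assumes x: "x \<in> Z"
  shows "continuous (at x within X) h"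
  unfolding continuous_within_eps_delta
proof (intro allI impI)
  fix e :: real assume e: "e > 0"
  obtain d0 where d0: "d0 > 0" "\<forall>z\<in>Z. dist z x < d0 \<longrightarrow> dist (h z) (h x) < e/2"
    using cont_Z x e unfolding continuous_on_iff by (meson half_gt_zero)
  obtain m where m: "\<And>j y. j \<in> I \<Longrightarrow> y \<in> X \<Longrightarrow> y \<notin> Z \<union> (\<Union>j\<in>{j\<in>I. j < m}. P j) \<Longrightarrow>
      y \<in> P j \<Longrightarrow> \<exists>z\<in>Z. dist y z < min (d0/2) (e/2) \<and> dist (h y) (h z) < min (d0/2) (e/2)"
    using Union_shrinking_tail_near[of "min (d0/2) (e/2)"] d0 e by auto
  obtain d1 where d1: "d1 > 0" "\<forall>y\<in>Z \<union> (\<Union>j\<in>{j\<in>I. j < m}. P j). dist y x < d1 \<longrightarrow> dist (h y) (h x) < e"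
    using continuous_on_Union_shrinking_initial[of m] x e unfolding continuous_on_iff by blast
  show "\<exists>d>0. \<forall>y\<in>X. dist y x < d \<longrightarrow> dist (h y) (h x) < e"
  proof (intro exI[of _ "min d1 (d0/2)"] conjI ballI impI)
    fix y assume y: "y \<in> X" "dist y x < min d1 (d0/2)"
    show "dist (h y) (h x) < e"
    proof (cases "y \<in> Z \<union> (\<Union>j\<in>{j\<in>I. j < m}. P j)")
      case False
      then obtain z where z: "z \<in> Z" "dist y z < d0/2" "dist (h y) (h z) < e/2"
        using m[OF _ y(1)] y(1) X by fastforce
      have "dist z x < d0" using z y dist_triangle[of z x y] by (simp add: dist_commute)
      then have "dist (h z) (h x) < e/2" using d0 z by blast
      then show ?thesis using z dist_triangle[of "h y" "h x" "h z"] by linarith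
    qed (use d1 y in auto)
  qed (use d0 d1 in auto)
qed

lemma continuous_within_Union_shrinking_not_Z:
  assumes x: "x \<in> X" "x \<notin> Z"
  shows "continuous (at x within X) h"
  unfolding continuous_within_eps_delta
proof (intro allI impI)
  fix e :: real assume e: "e > 0"
  obtain d0 where d0: "d0 > 0" "ball x d0 \<subseteq> - Z"
    using closed_Z x(2) by (meson ComplI open_Compl open_contains_ball_eq)
  obtain m where m: "\<And>j y. j \<in> I \<Longrightarrow> y \<in> X \<Longrightarrow> y \<notin> Z \<union> (\<Union>j\<in>{j\<in>I. j < m}. P j) \<Longrightarrow>
      y \<in> P j \<Longrightarrow> \<exists>z\<in>Z. dist y z < d0/2 \<and> dist (h y) (h z) < d0/2"
    using Union_shrinking_tail_near[of "d0/2"] d0 by auto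
  have near: "y \<in> Z \<union> (\<Union>j\<in>{j\<in>I. j < m}. P j)" if y: "y \<in> X" "dist y x < d0/2" for y
  proof (rule ccontr)
    assume "y \<notin> Z \<union> (\<Union>j\<in>{j\<in>I. j < m}. P j)"
    then obtain z where "z \<in> Z" "dist y z < d0/2" using m[OF _ y(1)] y(1) X by fastforce
    then have "z \<in> ball x d0" using y(2) dist_triangle[of x z y] by (simp add: dist_commute)
    then show False using d0 \<open>z \<in> Z\<close> by blast
  qed
  obtain d1 where d1: "d1 > 0" "\<forall>y\<in>Z \<union> (\<Union>j\<in>{j\<in>I. j < m}. P j). dist y x < d1 \<longrightarrow> dist (h y) (h x) < e"
    using continuous_on_Union_shrinking_initial[of m] near[OF x(1)] d0 e unfolding continuous_on_iff by force
  show "\<exists>d>0. \<forall>y\<in>X. dist y x < d \<longrightarrow> dist (h y) (h x) < e"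
    using d0 d1 near by (intro exI[of _ "min d1 (d0/2)"]) auto
qed

lemma continuous_on_Union_shrinking: "continuous_on X h"
  unfolding continuous_on_eq_continuous_within
  using continuous_within_Union_shrinking_Z continuous_within_Union_shrinking_not_Z X by blast

end

lemma continuous_on_bounded_scaleR:
  fixes k :: "'x::metric_space \<Rightarrow> real" and v :: "'x \<Rightarrow> 'v::real_normed_vector"
  assumes cont_v: "continuous_on D v" and cont_k: "continuous_on {x\<in>D. v x \<noteq> 0} k"
    and bounded: "\<And>x. x \<in> D \<Longrightarrow> \<bar>k x\<bar> \<le> 1"
  shows "continuous_on D (\<lambda>x. k x *\<^sub>R v x)"
  unfolding continuous_on_iff
proof (intro ballI allI impI)
  fix x e assume x: "x \<in> D" and e: "(0::real) < e"
  show "\<exists>d>0. \<forall>y\<in>D. dist y x < d \<longrightarrow> dist (k y *\<^sub>R v y) (k x *\<^sub>R v x) < e"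
  proof (cases "v x = 0")
    case True
    obtain d where d: "d > 0" "\<forall>y\<in>D. dist y x < d \<longrightarrow> norm (v y) < e"
      using cont_v x e True unfolding continuous_on_iff dist_norm by force
    have "norm (k y *\<^sub>R v y) \<le> norm (v y)" if "y \<in> D" for y
      using bounded[OF that] by (simp add: mult_left_le_one_le)
    then show ?thesis
      using d True by (intro exI[of _ d]) (force simp: dist_norm)
  next
    case False
    obtain d0 where d0: "d0 > 0" "\<forall>y\<in>D. dist y x < d0 \<longrightarrow> v y \<noteq> 0"
      using cont_v x False unfolding continuous_on_iff
      by (metis dist_norm dist_commute less_irrefl zero_less_norm_iff diff_zero)
    have "continuous_on {x\<in>D. v x \<noteq> 0} (\<lambda>x. k x *\<^sub>R v x)"
      by (intro continuous_intros cont_k continuous_on_subset[OF cont_v]) auto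
    then obtain d1 where d1: "d1 > 0" "\<forall>y\<in>{x\<in>D. v x \<noteq> 0}. dist y x < d1 \<longrightarrow>
        dist (k y *\<^sub>R v y) (k x *\<^sub>R v x) < e"
      using x False e unfolding continuous_on_iff by (metis (mono_tags, lifting) mem_Collect_eq)
    show ?thesis
      using d0 d1 by (intro exI[of _ "min d0 d1"]) auto
  qed
qed

lemma homotopic_with_canonI:
  assumes "continuous_on ({0..1::real} \<times> S) h" "h ` ({0..1} \<times> S) \<subseteq> T"
    and "\<And>x. x \<in> S \<Longrightarrow> h (0, x) = p x" "\<And>x. x \<in> S \<Longrightarrow> h (1, x) = q x"
  shows "homotopic_with_canon (\<lambda>x. True) S T p q"
  using assms by (subst homotopic_with) (auto simp: image_subset_iff Pi_iff intro!: exI[of _ h])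

lemma homeomorphism_Times:
  assumes "homeomorphism S S' f f'" and "homeomorphism T T' g g'"
  shows "homeomorphism (S \<times> T) (S' \<times> T') (\<lambda>(x, y). (f x, g y)) (\<lambda>(x, y). (f' x, g' y))"
  using assms unfolding homeomorphism_def
  by (auto simp: case_prod_unfold image_iff
      intro!: continuous_intros continuous_on_compose2[of S f] continuous_on_compose2[of T g]
              continuous_on_compose2[of S' f'] continuous_on_compose2[of T' g'])

section \<open>Convex charts and radial collapses\<close>

definition convex_chart ::
    "'a::metric_space set \<Rightarrow> 'a \<Rightarrow> ('a \<Rightarrow> 'c::real_normed_vector) \<Rightarrow> ('c \<Rightarrow> 'a) \<Rightarrow> 'a set \<Rightarrow> bool" where
  "convex_chart X x0 \<phi> \<psi> N \<longleftrightarrow>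
     N \<subseteq> X \<and> compact N \<and> x0 \<in> N \<and> homeomorphism N (\<phi> ` N) \<phi> \<psi> \<and> convex (\<phi> ` N) \<and>
     (\<forall>x\<in>N. norm (\<phi> x - \<phi> x0) \<le> 1) \<and> openin (top_of_set X) {x\<in>N. norm (\<phi> x - \<phi> x0) < 1}"

lemma convex_chart_from_openin:
  fixes \<Phi> :: "'a::metric_space \<Rightarrow> 'c::euclidean_space"
  assumes U: "openin (top_of_set X) U" and x0: "x0 \<in> U" and hom: "homeomorphism U E \<Phi> \<Phi>'"
    and "convex E" and "closed E"
  shows "\<exists>N. convex_chart X x0 \<Phi> \<Phi>' N"
proof -
  let ?B = "cball (\<Phi> x0) 1 \<inter> E"
  let ?N = "\<Phi>' ` ?B"
  have cont: "continuous_on U \<Phi>" "continuous_on E \<Phi>'" and img: "\<Phi> ` U = E" "\<Phi>' ` E = U"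
    and inv: "\<And>x. x \<in> U \<Longrightarrow> \<Phi>' (\<Phi> x) = x" "\<And>y. y \<in> E \<Longrightarrow> \<Phi> (\<Phi>' y) = y"
    using hom by (auto simp: homeomorphism_def)
  have N_U: "?N \<subseteq> U" using img by auto
  have img_N: "\<Phi> ` ?N = ?B" using inv by (force simp: image_iff)
  have small_ball: "{x\<in>?N. norm (\<Phi> x - \<Phi> x0) < 1} = U \<inter> \<Phi> -` ball (\<Phi> x0) 1"
  proof (intro equalityI subsetI)
    fix x assume x: "x \<in> U \<inter> \<Phi> -` ball (\<Phi> x0) 1"
    then have "\<Phi> x \<in> ?B" using img by (auto simp: dist_norm norm_minus_commute)
    then have "x \<in> ?N" using inv(1) x by (metis IntD1 image_eqI)
    then show "x \<in> {x\<in>?N. norm (\<Phi> x - \<Phi> x0) < 1}"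
      using x by (simp add: dist_norm norm_minus_commute)
  qed (use N_U in \<open>auto simp: dist_norm norm_minus_commute\<close>)
  have "openin (top_of_set U) (U \<inter> \<Phi> -` ball (\<Phi> x0) 1)"
    by (rule continuous_openin_preimage_gen[OF cont(1)]) simp
  then have open_ball: "openin (top_of_set X) {x\<in>?N. norm (\<Phi> x - \<Phi> x0) < 1}"
    unfolding small_ball using U openin_trans by blast
  show ?thesis
    unfolding convex_chart_def
  proof (intro exI[of _ ?N] conjI)
    show "?N \<subseteq> X" using N_U openin_subset[OF U] by auto
    show "x0 \<in> ?N" using x0 img inv(1) by (auto intro: image_eqI[of _ _ "\<Phi> x0"])
    show "compact ?N"
      by (intro compact_continuous_image continuous_on_subset[OF cont(2)] compact_Int_closed)
        (use \<open>closed E\<close> in auto)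
    show "homeomorphism ?N (\<Phi> ` ?N) \<Phi> \<Phi>'"
      by (rule homeomorphism_of_subsets[OF hom N_U _ refl]) auto
    show "convex (\<Phi> ` ?N)" unfolding img_N using \<open>convex E\<close> by (intro convex_Int convex_cball)
    show "\<forall>x\<in>?N. norm (\<Phi> x - \<Phi> x0) \<le> 1"
      using img_N by (force simp: dist_norm norm_minus_commute)
  qed (rule open_ball)
qed

definition chart_radius :: "('a \<Rightarrow> 'c::real_normed_vector) \<Rightarrow> 'a \<Rightarrow> 'a set \<Rightarrow> 'a \<Rightarrow> real" where
  "chart_radius \<phi> x0 N x = (if x \<in> N then norm (\<phi> x - \<phi> x0) else 1)"

text \<open>\<open>chart_collapse \<phi> \<psi> x0 N a\<close> maps the chart ball of radius \<open>a\<close> to \<open>x0\<close> and stretches the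
  annulus \<open>a \<le> r \<le> 1\<close> radially onto the whole unit ball; outside the chart it is the identity.\<close>
definition chart_collapse ::
    "('a \<Rightarrow> 'c::real_normed_vector) \<Rightarrow> ('c \<Rightarrow> 'a) \<Rightarrow> 'a \<Rightarrow> 'a set \<Rightarrow> real \<Rightarrow> 'a \<Rightarrow> 'a" where
  "chart_collapse \<phi> \<psi> x0 N a x =
     (if x \<in> N then \<psi> (\<phi> x0 + (max 0 (chart_radius \<phi> x0 N x - a) / ((1 - a) * chart_radius \<phi> x0 N x))
                              *\<^sub>R (\<phi> x - \<phi> x0))
      else x)"

lemma convex_chart_decompose:
  assumes "closed X" and "convex_chart X x0 \<phi> \<psi> N"
  obtains R where "closed R" "X = N \<union> R" "\<And>x. x \<in> R \<Longrightarrow> chart_radius \<phi> x0 N x = 1"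
proof
  let ?O = "{x\<in>N. norm (\<phi> x - \<phi> x0) < 1}"
  have "closedin (top_of_set X) (X - ?O)"
    using assms(2) by (auto simp: convex_chart_def)
  then show "closed (X - ?O)" using assms(1) closedin_closed_trans by blast
  show "X = N \<union> (X - ?O)" using assms(2) by (auto simp: convex_chart_def)
  show "chart_radius \<phi> x0 N x = 1" if "x \<in> X - ?O" for x
  proof -
    have "x \<in> N \<Longrightarrow> norm (\<phi> x - \<phi> x0) \<le> 1" using assms(2) by (simp add: convex_chart_def)
    then show ?thesis using that by (auto simp: chart_radius_def)
  qed
qed

lemma continuous_on_chart_radius:
  assumes "closed X" and chart: "convex_chart X x0 \<phi> \<psi> N"
  shows "continuous_on X (chart_radius \<phi> x0 N)"
proof -
  obtain R where R: "closed R" "X = N \<union> R" "\<And>x. x \<in> R \<Longrightarrow> chart_radius \<phi> x0 N x = 1"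
    using convex_chart_decompose[OF assms] by blast
  have cont_\<phi>: "continuous_on N \<phi>" and "compact N"
    using chart by (auto simp: convex_chart_def homeomorphism_def)
  have "continuous_on N (chart_radius \<phi> x0 N)"
    by (rule continuous_on_eq[of N "\<lambda>x. norm (\<phi> x - \<phi> x0)"])
      (auto intro!: continuous_intros cont_\<phi> simp: chart_radius_def)
  moreover have "continuous_on R (chart_radius \<phi> x0 N)"
    using R(3) by (intro continuous_on_eq[OF continuous_on_const]) auto
  ultimately show ?thesis
    using R(1,2) continuous_on_closed_Un[OF compact_imp_closed[OF \<open>compact N\<close>] R(1)] by simp
qed

lemma convex_chart_segment:
  assumes chart: "convex_chart X x0 \<phi> \<psi> N" and x: "x \<in> N" and k: "0 \<le> k" "k \<le> 1"
  shows "\<phi> x0 + k *\<^sub>R (\<phi> x - \<phi> x0) \<in> \<phi> ` N"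
proof -
  have "\<phi> x0 + k *\<^sub>R (\<phi> x - \<phi> x0) = (1 - k) *\<^sub>R \<phi> x0 + k *\<^sub>R \<phi> x"
    by (simp add: algebra_simps)
  also have "\<dots> \<in> \<phi> ` N"
    using chart x k by (intro convexD_alt) (auto simp: convex_chart_def)
  finally show ?thesis .
qed

lemma collapse_factor_bounds:
  fixes a r :: real
  assumes "0 \<le> a" "a < 1" "0 \<le> r" "r \<le> 1"
  shows "0 \<le> max 0 (r - a) / ((1 - a) * r)" "max 0 (r - a) / ((1 - a) * r) \<le> 1"
proof -
  show "0 \<le> max 0 (r - a) / ((1 - a) * r)" using assms by simp
  have "a * r \<le> a" using assms by (simp add: mult_left_le)
  then have "r - a \<le> (1 - a) * r" by (simp add: algebra_simps)
  moreover have "0 \<le> (1 - a) * r" using assms by simp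
  ultimately have "max 0 (r - a) \<le> (1 - a) * r" by simp
  then show "max 0 (r - a) / ((1 - a) * r) \<le> 1"
    using assms by (cases "r = 0") (auto simp: divide_le_eq_1)
qed

lemma continuous_on_chart_collapse:
  assumes "closed X" and chart: "convex_chart X x0 \<phi> \<psi> N"
  shows "continuous_on ({0..1/2} \<times> X) (\<lambda>(a, x). chart_collapse \<phi> \<psi> x0 N a x)"
proof -
  let ?r = "chart_radius \<phi> x0 N"
  let ?k = "\<lambda>(a, x). max 0 (?r x - a) / ((1 - a) * ?r x)"
  let ?v = "\<lambda>z::real \<times> 'a. \<phi> (snd z) - \<phi> x0"
  obtain R where R: "closed R" "X = N \<union> R" "\<And>x. x \<in> R \<Longrightarrow> ?r x = 1"
    using convex_chart_decompose[OF assms] by blast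
  have cont_\<phi>: "continuous_on N \<phi>" and cont_\<psi>: "continuous_on (\<phi> ` N) \<psi>" and "compact N"
    and inv: "\<And>x. x \<in> N \<Longrightarrow> \<psi> (\<phi> x) = x" and le_1: "\<And>x. x \<in> N \<Longrightarrow> ?r x \<le> 1"
    using chart by (auto simp: convex_chart_def homeomorphism_def chart_radius_def)
  have k_bounds: "0 \<le> ?k z" "?k z \<le> 1" if "z \<in> {0..1/2} \<times> N" for z
    using that le_1 collapse_factor_bounds[of "fst z" "?r (snd z)"]
    by (auto simp: chart_radius_def)
  have cont_v: "continuous_on ({0..1/2} \<times> N) ?v"
    by (intro continuous_on_compose2[OF cont_\<phi>] continuous_intros) (auto simp: case_prod_unfold)
  have cont_k: "continuous_on {z \<in> {0..1/2} \<times> N. ?v z \<noteq> 0} ?k"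
  proof (rule continuous_on_eq)
    show "continuous_on {z \<in> {0..1/2} \<times> N. ?v z \<noteq> 0}
            (\<lambda>z. max 0 (norm (?v z) - fst z) / ((1 - fst z) * norm (?v z)))"
      by (intro continuous_intros continuous_on_compose2[OF cont_\<phi>])
        (auto simp: case_prod_unfold)
  qed (auto simp: chart_radius_def)
  have "continuous_on ({0..1/2} \<times> N) (\<lambda>z. ?k z *\<^sub>R ?v z)"
    by (rule continuous_on_bounded_scaleR[OF cont_v cont_k]) (use k_bounds in auto)
  then have "continuous_on ({0..1/2} \<times> N) (\<lambda>z. \<phi> x0 + ?k z *\<^sub>R ?v z)"
    by (rule continuous_on_add[OF continuous_on_const])
  then have "continuous_on ({0..1/2} \<times> N) (\<lambda>z. \<psi> (\<phi> x0 + ?k z *\<^sub>R ?v z))"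
    using convex_chart_segment[OF chart] k_bounds
    by (intro continuous_on_compose2[OF cont_\<psi>]) (auto simp: case_prod_unfold)
  then have on_N: "continuous_on ({0..1/2} \<times> N) (\<lambda>(a, x). chart_collapse \<phi> \<psi> x0 N a x)"
    by (rule continuous_on_eq) (auto simp: chart_collapse_def)
  have collapse_R: "chart_collapse \<phi> \<psi> x0 N a x = x" if "a \<le> 1/2" "x \<in> R" for a x
  proof (cases "x \<in> N")
    case True
    have "chart_collapse \<phi> \<psi> x0 N a x = \<psi> (\<phi> x0 + ?k (a, x) *\<^sub>R (\<phi> x - \<phi> x0))"
      using True by (simp add: chart_collapse_def)
    also have "?k (a, x) = 1" using R(3)[OF that(2)] that(1) by simp
    finally show ?thesis using True inv by simp
  qed (simp add: chart_collapse_def)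
  have on_R: "continuous_on ({0..1/2} \<times> R) (\<lambda>(a, x). chart_collapse \<phi> \<psi> x0 N a x)"
    by (rule continuous_on_eq[OF continuous_on_snd[OF continuous_on_id]]) (auto simp: collapse_R)
  have "closed ({0..1/2::real} \<times> N)" "closed ({0..1/2::real} \<times> R)"
    using \<open>compact N\<close> R(1) by (simp_all add: closed_Times compact_imp_closed)
  moreover have "{0..1/2} \<times> X = {0..1/2::real} \<times> N \<union> {0..1/2} \<times> R" using R(2) by auto
  ultimately show ?thesis
    using continuous_on_closed_Un[OF _ _ on_N on_R] by simp
qed

text \<open>The structure that \<open>chart_radius\<close> and \<open>chart_collapse\<close> give at the centre of a convex
  chart; unlike a chart, it is transported by homeomorphisms.\<close>
definition radial_collapse ::
    "'a::topological_space set \<Rightarrow> 'a \<Rightarrow> ('a \<Rightarrow> real) \<Rightarrow> (real \<Rightarrow> 'a \<Rightarrow> 'a) \<Rightarrow> bool" where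
  "radial_collapse K x0 \<rho> C \<longleftrightarrow>
     x0 \<in> K \<and> continuous_on K \<rho> \<and> (\<forall>x\<in>K. 0 \<le> \<rho> x) \<and> \<rho> x0 = 0 \<and>
     continuous_on ({0..1/2} \<times> K) (\<lambda>(a, x). C a x) \<and> (\<forall>x\<in>K. C 0 x = x) \<and>
     (\<forall>a\<in>{0..1/2}. \<forall>x\<in>K. C a x \<in> K \<and> (\<rho> x \<le> a \<longrightarrow> C a x = x0))"

lemma radial_collapse_chart:
  assumes "closed X" and chart: "convex_chart X x0 \<phi> \<psi> N"
  shows "radial_collapse X x0 (chart_radius \<phi> x0 N) (chart_collapse \<phi> \<psi> x0 N)"
proof -
  let ?r = "chart_radius \<phi> x0 N"
  let ?k = "\<lambda>a x. max 0 (?r x - a) / ((1 - a) * ?r x)"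
  have N: "N \<subseteq> X" "x0 \<in> N" and inv: "\<And>x. x \<in> N \<Longrightarrow> \<psi> (\<phi> x) = x"
    and \<psi>_N: "\<psi> ` \<phi> ` N = N" and le_1: "\<And>x. x \<in> N \<Longrightarrow> ?r x \<le> 1"
    using chart by (auto simp: convex_chart_def homeomorphism_def chart_radius_def)
  have collapse_N: "chart_collapse \<phi> \<psi> x0 N a x = \<psi> (\<phi> x0 + ?k a x *\<^sub>R (\<phi> x - \<phi> x0))"
    if "x \<in> N" for a x
    using that by (simp add: chart_collapse_def)
  have collapse_in: "chart_collapse \<phi> \<psi> x0 N a x \<in> X" if "a \<in> {0..1/2}" "x \<in> X" for a x
  proof (cases "x \<in> N")
    case True
    have "?r x \<ge> 0" using True by (simp add: chart_radius_def)
    then have "0 \<le> ?k a x" "?k a x \<le> 1"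
      using collapse_factor_bounds[of a "?r x"] le_1[OF True] that(1) by auto
    then have "\<phi> x0 + ?k a x *\<^sub>R (\<phi> x - \<phi> x0) \<in> \<phi> ` N"
      using convex_chart_segment[OF chart True] by blast
    then show ?thesis using collapse_N[OF True] \<psi>_N N(1) by blast
  qed (use that in \<open>simp add: chart_collapse_def\<close>)
  have collapse_0: "chart_collapse \<phi> \<psi> x0 N 0 x = x" for x
  proof (cases "x \<in> N")
    case True
    have "\<phi> x0 + ?k 0 x *\<^sub>R (\<phi> x - \<phi> x0) = \<phi> x"
      by (cases "\<phi> x = \<phi> x0") (simp_all add: chart_radius_def True)
    then show ?thesis using collapse_N[OF True] inv[OF True] by simp
  qed (simp add: chart_collapse_def)
  have collapse_centre: "chart_collapse \<phi> \<psi> x0 N a x = x0" if "a \<le> 1/2" "?r x \<le> a" for a x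
  proof -
    have "x \<in> N" using that by (auto simp: chart_radius_def split: if_splits)
    moreover have "?k a x = 0" using that by simp
    ultimately show ?thesis using collapse_N[of x a] inv[OF N(2)] by (simp del: divide_eq_0_iff)
  qed
  show ?thesis
    unfolding radial_collapse_def
  proof (intro conjI ballI impI)
    show "?r x0 = 0" "\<And>x. 0 \<le> ?r x" by (simp_all add: chart_radius_def N(2))
  qed (use N(1,2) collapse_in collapse_0 collapse_centre continuous_on_chart_radius[OF assms]
         continuous_on_chart_collapse[OF assms] in auto)
qed

lemma radial_collapse_homeomorphism:
  assumes hom: "homeomorphism M X \<alpha> \<alpha>'" and collapse: "radial_collapse M u \<rho> C"
  shows "radial_collapse X (\<alpha> u) (\<rho> \<circ> \<alpha>') (\<lambda>a. \<alpha> \<circ> C a \<circ> \<alpha>')"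
proof -
  have \<alpha>: "continuous_on M \<alpha>" "\<And>x. x \<in> M \<Longrightarrow> \<alpha> x \<in> X" "\<And>x. x \<in> M \<Longrightarrow> \<alpha>' (\<alpha> x) = x"
    and \<alpha>': "continuous_on X \<alpha>'" "\<And>y. y \<in> X \<Longrightarrow> \<alpha>' y \<in> M" "\<And>y. y \<in> X \<Longrightarrow> \<alpha> (\<alpha>' y) = y"
    using hom by (auto simp: homeomorphism_def)
  have u: "u \<in> M" "\<rho> u = 0" and \<rho>: "continuous_on M \<rho>" "\<And>x. x \<in> M \<Longrightarrow> 0 \<le> \<rho> x"
    and C: "continuous_on ({0..1/2} \<times> M) (\<lambda>(a, x). C a x)" "\<And>x. x \<in> M \<Longrightarrow> C 0 x = x"
      "\<And>a x. a \<in> {0..1/2} \<Longrightarrow> x \<in> M \<Longrightarrow> C a x \<in> M"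
      "\<And>a x. a \<in> {0..1/2} \<Longrightarrow> x \<in> M \<Longrightarrow> \<rho> x \<le> a \<Longrightarrow> C a x = u"
    using collapse unfolding radial_collapse_def by auto
  have "continuous_on ({0..1/2::real} \<times> X) (\<lambda>z. (fst z, \<alpha>' (snd z)))"
    by (intro continuous_intros continuous_on_compose2[OF \<alpha>'(1)]) auto
  then have "continuous_on ({0..1/2} \<times> X) (\<lambda>z. C (fst z) (\<alpha>' (snd z)))"
    by (rule continuous_on_compose2[OF C(1), where f = "\<lambda>z. (fst z, \<alpha>' (snd z))", simplified])
      (auto intro: \<alpha>'(2))
  then have "continuous_on ({0..1/2} \<times> X) (\<lambda>z. \<alpha> (C (fst z) (\<alpha>' (snd z))))"
    by (rule continuous_on_compose2[OF \<alpha>(1)]) (auto simp: \<alpha>'(2) C(3))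
  moreover have "continuous_on X (\<rho> \<circ> \<alpha>')"
    using \<alpha>' \<rho>(1) by (intro continuous_on_compose) (auto intro: continuous_on_subset)
  ultimately show ?thesis
    unfolding radial_collapse_def using \<alpha> \<alpha>' u \<rho>(2) C(2-4) by (simp add: case_prod_unfold)
qed

section \<open>Homogeneous, radially collapsible spaces\<close>

definition topologically_homogeneous :: "'a::topological_space set \<Rightarrow> bool" where
  "topologically_homogeneous S \<longleftrightarrow> (\<forall>u\<in>S. \<forall>v\<in>S. \<exists>h h'. homeomorphism S S h h' \<and> h u = v)"

definition radially_collapsible :: "'a::topological_space set \<Rightarrow> bool" where
  "radially_collapsible S \<longleftrightarrow> (\<forall>x\<in>S. \<exists>\<rho> C. radial_collapse S x \<rho> C)"

lemma homeomorphism_moving_point_to_homogeneous: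
  assumes "topologically_homogeneous T" "S homeomorphic T" "x \<in> S" "y \<in> T"
  obtains \<theta> \<theta>' where "homeomorphism S T \<theta> \<theta>'" "\<theta> x = y"
proof -
  obtain f f' where f: "homeomorphism S T f f'"
    using assms(2) by (auto simp: homeomorphic_def)
  then have "f x \<in> T" using assms(3) by (auto simp: homeomorphism_def)
  then obtain h h' where h: "homeomorphism T T h h'" "h (f x) = y"
    using assms(1,4) unfolding topologically_homogeneous_def by blast
  show ?thesis
    using that[OF homeomorphism_compose[OF f h(1)]] h(2) by simp
qed

lemma homeomorphic_topologically_homogeneous:
  assumes "S homeomorphic T" "topologically_homogeneous T"
  shows "topologically_homogeneous S"
  unfolding topologically_homogeneous_def
proof (intro ballI)
  fix u v assume "u \<in> S" "v \<in> S"
  obtain f f' where f: "homeomorphism S T f f'"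
    using assms(1) by (auto simp: homeomorphic_def)
  then have "f v \<in> T" "f' (f v) = v" using \<open>v \<in> S\<close> by (auto simp: homeomorphism_def)
  then obtain \<theta> \<theta>' where \<theta>: "homeomorphism S T \<theta> \<theta>'" "\<theta> u = f v"
    using homeomorphism_moving_point_to_homogeneous[OF assms(2,1) \<open>u \<in> S\<close>] by metis
  show "\<exists>h h'. homeomorphism S S h h' \<and> h u = v"
    using homeomorphism_compose[OF \<theta>(1) homeomorphism_symD[OF f]] \<theta>(2) \<open>f' (f v) = v\<close> by auto
qed

lemma homeomorphic_radially_collapsible:
  assumes "S homeomorphic T" "radially_collapsible T"
  shows "radially_collapsible S"
  unfolding radially_collapsible_def
proof
  fix x assume "x \<in> S"
  obtain \<alpha> \<alpha>' where hom: "homeomorphism T S \<alpha> \<alpha>'"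
    using assms(1) by (auto simp: homeomorphic_def dest: homeomorphism_symD)
  then have "\<alpha>' x \<in> T" "\<alpha> (\<alpha>' x) = x"
    using \<open>x \<in> S\<close> by (auto simp: homeomorphism_def)
  then show "\<exists>\<rho> C. radial_collapse S x \<rho> C"
    using radial_collapse_homeomorphism[OF hom] assms(2) unfolding radially_collapsible_def by metis
qed

lemma radial_collapse_from_openin:
  fixes \<Phi> :: "'a::metric_space \<Rightarrow> 'c::euclidean_space"
  assumes "closed X" "openin (top_of_set X) U" "x0 \<in> U" "homeomorphism U E \<Phi> \<Phi>'"
    and "convex E" "closed E"
  shows "\<exists>\<rho> C. radial_collapse X x0 \<rho> C"
  using convex_chart_from_openin[OF assms(2-6)] radial_collapse_chart[OF assms(1)] by blast

lemma homeomorphic_to_same: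
  "X homeomorphic M \<Longrightarrow> Y homeomorphic M \<Longrightarrow> X homeomorphic Y"
  using homeomorphic_sym homeomorphic_trans by metis

lemma homeomorphic_compact_homogeneous_collapsible:
  assumes "X homeomorphic M" "compact M" "topologically_homogeneous M" "radially_collapsible M"
  shows "compact X \<and> topologically_homogeneous X \<and> radially_collapsible X"
  using assms homeomorphic_compactness homeomorphic_topologically_homogeneous
    homeomorphic_radially_collapsible by blast

section \<open>Spheres and products of spheres\<close>

lemma punctured_sphere_chart:
  fixes b :: "'a::euclidean_space"
  assumes "b \<in> sphere 0 1"
  obtains \<Phi> \<Phi>' where "homeomorphism (sphere 0 1 - {-b}) {x. b \<bullet> x = 0} \<Phi> \<Phi>'"
    and "b \<in> sphere 0 1 - {-b}" "openin (top_of_set (sphere 0 1)) (sphere 0 1 - {-b})"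
proof -
  have "(sphere (0::'a) 1 - {-b}) homeomorphic {x. b \<bullet> x = 0}"
    using assms by (intro homeomorphic_punctured_sphere_hyperplane) auto
  moreover have "b \<noteq> -b"
  proof
    assume "b = -b"
    then have "2 *\<^sub>R b = 0" by (metis add.right_inverse scaleR_2)
    then show False using assms by simp
  qed
  moreover have "openin (top_of_set (sphere 0 1)) (sphere (0::'a) 1 - {-b})"
    by (simp add: Diff_eq openin_open_Int open_Compl)
  ultimately show ?thesis
    using assms that by (auto simp: homeomorphic_def)
qed

lemma radially_collapsible_sphere: "radially_collapsible (sphere (0::'a::euclidean_space) 1)"
  unfolding radially_collapsible_def
proof
  fix b :: 'a assume "b \<in> sphere 0 1"
  then obtain \<Phi> \<Phi>' where "homeomorphism (sphere 0 1 - {-b}) {x. b \<bullet> x = 0} \<Phi> \<Phi>'"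
    "b \<in> sphere 0 1 - {-b}" "openin (top_of_set (sphere 0 1)) (sphere 0 1 - {-b})"
    by (rule punctured_sphere_chart)
  then show "\<exists>\<rho> C. radial_collapse (sphere 0 1) b \<rho> C"
    by (intro radial_collapse_from_openin) (auto intro: convex_hyperplane closed_hyperplane)
qed

lemma radially_collapsible_sphere_Times:
  "radially_collapsible (sphere (0::'a::euclidean_space) 1 \<times> sphere (0::'a) 1)"
  unfolding radially_collapsible_def
proof
  fix b :: "'a \<times> 'a" assume "b \<in> sphere 0 1 \<times> sphere 0 1"
  then obtain b1 b2 where b: "b = (b1, b2)" "b1 \<in> sphere 0 1" "b2 \<in> sphere 0 1" by auto
  obtain \<Phi>1 \<Phi>1' where \<Phi>1: "homeomorphism (sphere 0 1 - {-b1}) {x. b1 \<bullet> x = 0} \<Phi>1 \<Phi>1'"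
    "b1 \<in> sphere 0 1 - {-b1}" "openin (top_of_set (sphere 0 1)) (sphere 0 1 - {-b1})"
    using punctured_sphere_chart[OF b(2)] by blast
  obtain \<Phi>2 \<Phi>2' where \<Phi>2: "homeomorphism (sphere 0 1 - {-b2}) {x. b2 \<bullet> x = 0} \<Phi>2 \<Phi>2'"
    "b2 \<in> sphere 0 1 - {-b2}" "openin (top_of_set (sphere 0 1)) (sphere 0 1 - {-b2})"
    using punctured_sphere_chart[OF b(3)] by blast
  show "\<exists>\<rho> C. radial_collapse (sphere 0 1 \<times> sphere 0 1) b \<rho> C"
    using \<Phi>1(2) \<Phi>2(2) unfolding b
    by (intro radial_collapse_from_openin[OF _ openin_Times[OF \<Phi>1(3) \<Phi>2(3)] _
          homeomorphism_Times[OF \<Phi>1(1) \<Phi>2(1)]])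
      (auto intro: convex_Times closed_Times convex_hyperplane closed_hyperplane)
qed

lemma topologically_homogeneous_sphere:
  "topologically_homogeneous (sphere (0::'a::real_inner) 1)"
  unfolding topologically_homogeneous_def
proof (intro ballI)
  fix u v :: 'a assume u: "u \<in> sphere 0 1" and v: "v \<in> sphere 0 1"
  show "\<exists>h h'. homeomorphism (sphere 0 1) (sphere 0 1) h h' \<and> h u = v"
  proof (cases "u = v")
    case True
    then show ?thesis using homeomorphism_ident by blast
  next
    case False
    define w where "w = u - v"
    \<comment> \<open>the reflection in the hyperplane orthogonal to \<open>u - v\<close>, which swaps \<open>u\<close> and \<open>v\<close>\<close>
    define f where "f x = x - (2 * (x \<bullet> w) / (w \<bullet> w)) *\<^sub>R w" for x
    have ww: "w \<bullet> w \<noteq> 0" using False by (simp add: w_def)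
    have f_inner: "f x \<bullet> f x = x \<bullet> x" for x
    proof -
      define c where "c = 2 * (x \<bullet> w) / (w \<bullet> w)"
      have c: "c * (w \<bullet> w) = 2 * (x \<bullet> w)" using ww by (simp add: c_def)
      have "f x \<bullet> f x = x \<bullet> x - 2 * c * (x \<bullet> w) + c * (c * (w \<bullet> w))"
        using c by (simp add: f_def c_def[symmetric] inner_diff_left inner_diff_right inner_commute
            algebra_simps)
      also have "\<dots> = x \<bullet> x" using c by (simp add: algebra_simps)
      finally show ?thesis .
    qed
    have f_f: "f (f x) = x" for x
    proof -
      have "f x \<bullet> w = - (x \<bullet> w)" using ww by (simp add: f_def inner_diff_left)
      then show ?thesis by (simp add: f_def algebra_simps)
    qed
    have "u \<bullet> u = 1" "v \<bullet> v = 1" using u v by (simp_all add: dot_square_norm)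
    then have "2 * (u \<bullet> w) = w \<bullet> w"
      by (simp add: w_def inner_diff_left inner_diff_right inner_commute)
    then have "f u = v" using ww by (simp add: f_def w_def)
    moreover have f_sphere: "f ` sphere 0 1 \<subseteq> sphere 0 1"
      using f_inner by (auto simp: norm_eq_sqrt_inner)
    have cont: "continuous_on (sphere 0 1) f"
      unfolding f_def using ww by (intro continuous_intros) auto
    have "homeomorphism (sphere 0 1) (sphere 0 1) f f"
      by (rule homeomorphismI[OF cont cont f_sphere f_sphere]) (simp_all add: f_f)
    ultimately show ?thesis by blast
  qed
qed

lemma topologically_homogeneous_Times:
  assumes "topologically_homogeneous S" "topologically_homogeneous T"
  shows "topologically_homogeneous (S \<times> T)"
  unfolding topologically_homogeneous_def
proof (intro ballI)
  fix u v assume "u \<in> S \<times> T" "v \<in> S \<times> T"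
  then obtain f f' g g' where "homeomorphism S S f f'" "f (fst u) = fst v"
    and "homeomorphism T T g g'" "g (snd u) = snd v"
    using assms unfolding topologically_homogeneous_def by (metis mem_Times_iff)
  then have "homeomorphism (S \<times> T) (S \<times> T) (\<lambda>(x, y). (f x, g y)) (\<lambda>(x, y). (f' x, g' y))"
    and "(\<lambda>(x, y). (f x, g y)) u = v"
    by (blast intro: homeomorphism_Times, simp add: case_prod_unfold prod_eq_iff)
  then show "\<exists>h h'. homeomorphism (S \<times> T) (S \<times> T) h h' \<and> h u = v" by blast
qed

section \<open>The wedge and the bouquet\<close>

locale wedge_and_bouquet =
  fixes K L :: "nat \<Rightarrow> 'a::real_normed_vector set" and g :: "real \<Rightarrow> 'a" and t :: "nat \<Rightarrow> real"
    and \<theta> \<theta>' :: "nat \<Rightarrow> 'a \<Rightarrow> 'a" and \<rho> :: "nat \<Rightarrow> 'a \<Rightarrow> real" and C :: "nat \<Rightarrow> real \<Rightarrow> 'a \<Rightarrow> 'a"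
  assumes compact_K: "\<And>j. 1 \<le> j \<Longrightarrow> compact (K j)"
    and K_Int: "\<And>i j. 1 \<le> i \<Longrightarrow> 1 \<le> j \<Longrightarrow> i \<noteq> j \<Longrightarrow> K i \<inter> K j = {0}"
    and diameter_K: "(\<lambda>j. diameter (K j)) \<longlonglongrightarrow> 0"
    and arc: "arc g" and t_1: "t 1 = 0" and t_less: "\<And>i. 1 \<le> i \<Longrightarrow> t i < t (Suc i)"
    and t_tendsto: "t \<longlonglongrightarrow> 1"
    and L_Int_arc: "\<And>j. 1 \<le> j \<Longrightarrow> L j \<inter> path_image g = {g (t j)}"
    and L_disjoint: "\<And>i j. 1 \<le> i \<Longrightarrow> 1 \<le> j \<Longrightarrow> i \<noteq> j \<Longrightarrow> L i \<inter> L j = {}"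
    and diameter_L: "(\<lambda>j. diameter (L j)) \<longlonglongrightarrow> 0"
    and homeo: "\<And>j. 1 \<le> j \<Longrightarrow> homeomorphism (K j) (L j) (\<theta> j) (\<theta>' j)"
    and \<theta>_0: "\<And>j. 1 \<le> j \<Longrightarrow> \<theta> j 0 = g (t j)"
    and collapse: "\<And>j. 1 \<le> j \<Longrightarrow> radial_collapse (K j) 0 (\<rho> j) (C j)"
begin

definition W :: "'a set" where "W = (\<Union>j\<in>{1..}. K j)"
definition V :: "'a set" where "V = path_image g \<union> (\<Union>j\<in>{1..}. L j)"

definition index_K :: "'a \<Rightarrow> nat" where "index_K x = (SOME j. 1 \<le> j \<and> x \<in> K j)"
definition index_L :: "'a \<Rightarrow> nat" where "index_L y = (SOME j. 1 \<le> j \<and> y \<in> L j)"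
definition arc_param :: "'a \<Rightarrow> real" where "arc_param = inv_into {0..1} g"

text \<open>The homotopy on the \<open>j\<close>-th factor: the part \<open>\<rho> j < (1 - s) / 2\<close> runs along the arc from
  \<open>g (1 - s * (1 - t j))\<close> to \<open>g (t j)\<close>, the rest is collapsed and carried onto \<open>L j\<close>.\<close>
definition T :: "nat \<Rightarrow> real \<Rightarrow> 'a \<Rightarrow> 'a" where
  "T j s x =
     (if \<rho> j x < (1 - s) / 2 then g (t j + (1 - s - 2 * \<rho> j x) * (1 - t j))
      else \<theta> j (C j ((1 - s) / 2) x))"

lemma collapse_K:
  assumes "1 \<le> j"
  shows "0 \<in> K j" "continuous_on (K j) (\<rho> j)" "\<And>x. x \<in> K j \<Longrightarrow> 0 \<le> \<rho> j x" "\<rho> j 0 = 0"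
    "continuous_on ({0..1/2} \<times> K j) (\<lambda>(a, x). C j a x)" "\<And>x. x \<in> K j \<Longrightarrow> C j 0 x = x"
    "\<And>a x. a \<in> {0..1/2} \<Longrightarrow> x \<in> K j \<Longrightarrow> C j a x \<in> K j"
    "\<And>a x. a \<in> {0..1/2} \<Longrightarrow> x \<in> K j \<Longrightarrow> \<rho> j x \<le> a \<Longrightarrow> C j a x = 0"
  using collapse[OF assms] unfolding radial_collapse_def by auto

lemma homeomorphism_\<theta>:
  assumes "1 \<le> j"
  shows "continuous_on (K j) (\<theta> j)" "\<And>x. x \<in> K j \<Longrightarrow> \<theta> j x \<in> L j"
    "continuous_on (L j) (\<theta>' j)" "\<And>y. y \<in> L j \<Longrightarrow> \<theta>' j y \<in> K j"
    "\<And>x. x \<in> K j \<Longrightarrow> \<theta>' j (\<theta> j x) = x" "\<And>y. y \<in> L j \<Longrightarrow> \<theta> j (\<theta>' j y) = y"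
  using homeo[OF assms] unfolding homeomorphism_def by auto

lemma compact_L: "1 \<le> j \<Longrightarrow> compact (L j)"
  using compact_K homeo homeomorphic_compactness homeomorphic_def by blast

lemma arc_point_in_L: "1 \<le> j \<Longrightarrow> g (t j) \<in> L j"
  using L_Int_arc by blast

lemma \<theta>'_arc_point: "1 \<le> j \<Longrightarrow> \<theta>' j (g (t j)) = 0"
  using homeomorphism_\<theta>(5) collapse_K(1) \<theta>_0 by metis

lemma t_mono:
  assumes "1 \<le> j" "j \<le> i"
  shows "t j \<le> t i"
  using assms(2)
proof (induction i rule: dec_induct)
  case (step i)
  then show ?case using t_less[of i] assms(1) by simp
qed simp

lemma t_bounds: "1 \<le> j \<Longrightarrow> 0 \<le> t j" "1 \<le> j \<Longrightarrow> t j \<le> 1"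
  using t_mono[of 1 j] t_1 by (simp, intro LIMSEQ_le_const[OF t_tendsto]) (use t_mono in auto)

lemma continuous_on_g: "continuous_on {0..1} g"
  using arc arc_imp_path path_def by blast

lemma path_image_g: "path_image g = g ` {0..1}"
  by (simp add: path_image_def)

lemma compact_path_image_g: "compact (path_image g)"
  using arc arc_imp_path compact_path_image by blast

lemma arc_tail_subset:
  assumes "1 \<le> j"
  shows "g ` {t j..1} \<subseteq> path_image g"
  unfolding path_image_g using t_bounds(1)[OF assms] by (intro image_mono) auto

lemma homeomorphism_arc_param: "homeomorphism {0..1} (path_image g) g arc_param"
proof -
  obtain h where h: "homeomorphism {0..1} (path_image g) g h"
    using homeomorphism_arc[OF arc] by blast
  have inj: "inj_on g {0..1}" using arc by (simp add: arc_def)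
  show ?thesis
  proof (rule homeomorphism_cong[OF h refl refl refl])
    fix y assume "y \<in> path_image g"
    then have "h y \<in> {0..1}" "g (h y) = y" using h by (auto simp: homeomorphism_def)
    then show "arc_param y = h y" unfolding arc_param_def by (metis inj inv_into_f_f)
  qed
qed

lemma arc_param_g: "s \<in> {0..1} \<Longrightarrow> arc_param (g s) = s"
  using arc by (simp add: arc_def arc_param_def inv_into_f_f)

lemma index_K:
  assumes "1 \<le> j" "x \<in> K j" "x \<noteq> 0"
  shows "index_K x = j"
proof -
  have "1 \<le> index_K x \<and> x \<in> K (index_K x)"
    unfolding index_K_def by (rule someI[of _ j]) (use assms in auto)
  then show ?thesis using K_Int[of j "index_K x"] assms by blast
qed

lemma index_K_W: "x \<in> W \<Longrightarrow> 1 \<le> index_K x \<and> x \<in> K (index_K x)"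
  unfolding index_K_def W_def by (rule someI_ex) auto

lemma index_L:
  assumes "1 \<le> j" "y \<in> L j"
  shows "index_L y = j"
proof -
  have "1 \<le> index_L y \<and> y \<in> L (index_L y)"
    unfolding index_L_def by (rule someI[of _ j]) (use assms in auto)
  then show ?thesis using L_disjoint[of j "index_L y"] assms by blast
qed

lemma eventually_K_small:
  assumes "e > 0"
  shows "\<forall>\<^sub>F j in sequentially. \<forall>x\<in>K j. norm x < e"
proof -
  have "\<forall>\<^sub>F j in sequentially. 1 \<le> j \<and> diameter (K j) < e"
    using eventually_ge_at_top order_tendstoD(2)[OF diameter_K assms] by (rule eventually_conj)
  then show ?thesis
  proof (rule eventually_mono, intro ballI)
    fix j x assume j: "1 \<le> j \<and> diameter (K j) < e" and "x \<in> K j"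
    then have "dist x 0 \<le> diameter (K j)"
      using diameter_bounded_bound[OF compact_imp_bounded[OF compact_K] _ collapse_K(1)] by blast
    then show "norm x < e" using j by simp
  qed
qed

lemma eventually_L_small:
  assumes "e > 0"
  shows "\<forall>\<^sub>F j in sequentially. \<forall>y\<in>L j. dist y (g (t j)) < e"
proof -
  have "\<forall>\<^sub>F j in sequentially. 1 \<le> j \<and> diameter (L j) < e"
    using eventually_ge_at_top order_tendstoD(2)[OF diameter_L assms] by (rule eventually_conj)
  then show ?thesis
  proof (rule eventually_mono, intro ballI)
    fix j y assume j: "1 \<le> j \<and> diameter (L j) < e" and "y \<in> L j"
    then have "dist y (g (t j)) \<le> diameter (L j)"
      using diameter_bounded_bound[OF compact_imp_bounded[OF compact_L] _ arc_point_in_L] by blast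
    then show "dist y (g (t j)) < e" using j by simp
  qed
qed

lemma eventually_arc_tail_small:
  assumes "e > 0"
  shows "\<forall>\<^sub>F j in sequentially. \<forall>s\<in>{t j..1}. dist (g s) (g 1) < e"
proof -
  obtain d where d: "d > 0" "\<And>s. s \<in> {0..1} \<Longrightarrow> dist s 1 < d \<Longrightarrow> dist (g s) (g 1) < e"
    using continuous_on_g assms unfolding continuous_on_iff by (metis atLeastAtMost_iff order_refl zero_le_one)
  have "\<forall>\<^sub>F j in sequentially. 1 \<le> j \<and> dist (t j) 1 < d"
    using eventually_ge_at_top tendstoD[OF t_tendsto d(1)] by (rule eventually_conj)
  then show ?thesis
  proof (rule eventually_mono, intro ballI)
    fix j s assume j: "1 \<le> j \<and> dist (t j) 1 < d" and s: "s \<in> {t j..1}"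
    then have "s \<in> {0..1}" "dist s 1 < d"
      using t_bounds[of j] by (auto simp: dist_real_def)
    then show "dist (g s) (g 1) < e" by (rule d(2))
  qed
qed

lemma eventually_tail_small:
  assumes "e > 0"
  shows "\<forall>\<^sub>F j in sequentially. \<forall>y \<in> L j \<union> g ` {t j..1}. dist y (g 1) < e"
proof -
  have "\<forall>\<^sub>F j in sequentially. 1 \<le> j \<and> (\<forall>y\<in>L j. dist y (g (t j)) < e/2) \<and>
      (\<forall>s\<in>{t j..1}. dist (g s) (g 1) < e/2)"
    using assms by (intro eventually_conj eventually_ge_at_top eventually_L_small
        eventually_arc_tail_small) auto
  then show ?thesis
  proof (rule eventually_mono, intro ballI)
    fix j y assume j: "1 \<le> j \<and> (\<forall>y\<in>L j. dist y (g (t j)) < e/2) \<and>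
      (\<forall>s\<in>{t j..1}. dist (g s) (g 1) < e/2)" and y: "y \<in> L j \<union> g ` {t j..1}"
    show "dist y (g 1) < e"
    proof (cases "y \<in> L j")
      case True
      have "dist (g (t j)) (g 1) < e/2" using j t_bounds[of j] by auto
      then show ?thesis using j True dist_triangle[of y "g 1" "g (t j)"] by auto
    next
      case False
      then obtain s where "s \<in> {t j..1}" "y = g s" using y by auto
      then have "dist y (g 1) < e/2" using j by blast
      then show ?thesis using assms by linarith
    qed
  qed
qed

lemma arc_segment_param:
  assumes "1 \<le> j" "0 \<le> s" "0 \<le> r" "2 * r \<le> 1 - s"
  shows "t j + (1 - s - 2 * r) * (1 - t j) \<in> {t j..1}"
proof -
  have "0 \<le> 1 - s - 2 * r" "1 - s - 2 * r \<le> 1" "0 \<le> 1 - t j"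
    using assms t_bounds[OF assms(1)] by auto
  then have "0 \<le> (1 - s - 2 * r) * (1 - t j)" "(1 - s - 2 * r) * (1 - t j) \<le> 1 - t j"
    by (simp_all add: mult_left_le_one_le)
  then show ?thesis by simp
qed

lemma T_in:
  assumes j: "1 \<le> j" and s: "s \<in> {0..1}" and x: "x \<in> K j"
  shows "T j s x \<in> L j \<union> g ` {t j..1}"
proof (cases "\<rho> j x < (1 - s) / 2")
  case True
  then show ?thesis
    using arc_segment_param[OF j, of s "\<rho> j x"] collapse_K(3)[OF j x] s by (simp add: T_def)
next
  case False
  then show ?thesis
    using collapse_K(7)[OF j _ x, of "(1 - s) / 2"] homeomorphism_\<theta>(2)[OF j] s by (simp add: T_def)
qed

lemma T_at_0:
  assumes j: "1 \<le> j" and s: "s \<in> {0..1}"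
  shows "T j s 0 = g (1 - s * (1 - t j))"
proof (cases "s = 1")
  case True
  then show ?thesis using collapse_K(1,4,6)[OF j] \<theta>_0[OF j] by (simp add: T_def)
next
  case False
  then have "\<rho> j 0 < (1 - s) / 2" using collapse_K(4)[OF j] s by simp
  moreover have "t j + (1 - s - 2 * 0) * (1 - t j) = 1 - s * (1 - t j)" by (simp add: algebra_simps)
  ultimately show ?thesis using collapse_K(4)[OF j] by (simp add: T_def)
qed

lemma T_1:
  assumes j: "1 \<le> j" and x: "x \<in> K j"
  shows "T j 1 x = \<theta> j x"
  using collapse_K(3,6)[OF j x] by (simp add: T_def)

lemma continuous_on_T:
  assumes j: "1 \<le> j"
  shows "continuous_on ({0..1} \<times> K j) (\<lambda>z. T j (fst z) (snd z))"
proof -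
  let ?D = "{0..1::real} \<times> K j"
  let ?r = "\<lambda>z::real \<times> 'a. \<rho> j (snd z)" and ?a = "\<lambda>z::real \<times> 'a. (1 - fst z) / 2"
  let ?E1 = "{z\<in>?D. ?r z \<le> ?a z}" and ?E2 = "{z\<in>?D. ?a z \<le> ?r z}"
  let ?p = "\<lambda>z. t j + (1 - fst z - 2 * ?r z) * (1 - t j)"
  have closed_D: "closed ?D" using compact_K[OF j] by (simp add: closed_Times compact_imp_closed)
  have cont_r: "continuous_on ?D ?r"
    by (rule continuous_on_compose2[OF collapse_K(2)[OF j] continuous_on_snd]) auto
  have cont_a: "continuous_on ?D ?a" by (intro continuous_intros) auto
  have closed_E: "closed ?E1" "closed ?E2"
    by (rule continuous_on_closed_Collect_le[OF cont_r cont_a closed_D],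
        rule continuous_on_closed_Collect_le[OF cont_a cont_r closed_D])
  have p_in: "?p z \<in> {t j..1}" if "z \<in> ?E1" for z
    using that arc_segment_param[OF j, of "fst z" "?r z"] collapse_K(3)[OF j] by auto
  have "continuous_on ?E1 (\<lambda>z. g (?p z))"
  proof (rule continuous_on_compose2[OF continuous_on_g])
    show "continuous_on ?E1 ?p"
      by (intro continuous_intros continuous_on_subset[OF cont_r]) auto
    show "?p ` ?E1 \<subseteq> {0..1}" using p_in t_bounds(1)[OF j] by force
  qed
  moreover have "g (?p z) = T j (fst z) (snd z)" if "z \<in> ?E1" for z
  proof (cases "?r z < ?a z")
    case False
    then have "1 - fst z - 2 * ?r z = 0" using that by simp
    moreover have "C j (?a z) (snd z) = 0" using that collapse_K(8)[OF j] by auto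
    ultimately show ?thesis using False \<theta>_0[OF j] by (simp add: T_def)
  qed (simp add: T_def)
  ultimately have on_E1: "continuous_on ?E1 (\<lambda>z. T j (fst z) (snd z))"
    by (rule continuous_on_eq)
  have "continuous_on ?E2 (\<lambda>z. (?a z, snd z))" by (intro continuous_intros) auto
  then have "continuous_on ?E2 (\<lambda>z. C j (?a z) (snd z))"
    by (rule continuous_on_compose2[OF collapse_K(5)[OF j], where f = "\<lambda>z. (?a z, snd z)", simplified])
      auto
  then have "continuous_on ?E2 (\<lambda>z. \<theta> j (C j (?a z) (snd z)))"
    by (rule continuous_on_compose2[OF homeomorphism_\<theta>(1)[OF j]]) (auto intro: collapse_K(7)[OF j])
  then have on_E2: "continuous_on ?E2 (\<lambda>z. T j (fst z) (snd z))"
    by (rule continuous_on_eq) (auto simp: T_def)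
  have "?D = ?E1 \<union> ?E2" by auto
  then show ?thesis using continuous_on_closed_Un[OF closed_E on_E1 on_E2] by simp
qed

text \<open>At the wedge point \<open>index_K\<close> picks an arbitrary factor; this is harmless because
  \<open>T j 0 0 = g 1\<close> and \<open>C j a 0 = 0\<close> for every \<open>j\<close>.\<close>
definition to_bouquet :: "'a \<Rightarrow> 'a" where "to_bouquet x = T (index_K x) 0 x"
definition to_wedge :: "'a \<Rightarrow> 'a" where
  "to_wedge y = (if y \<in> path_image g then 0 else \<theta>' (index_L y) y)"
definition wedge_homotopy :: "real \<times> 'a \<Rightarrow> 'a" where
  "wedge_homotopy z = C (index_K (snd z)) ((1 - fst z) / 2) (snd z)"
definition bouquet_homotopy :: "real \<times> 'a \<Rightarrow> 'a" where
  "bouquet_homotopy z =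
     (if snd z \<in> path_image g then g (1 - fst z * (1 - arc_param (snd z)))
      else T (index_L (snd z)) (fst z) (\<theta>' (index_L (snd z)) (snd z)))"

lemma W_eq: "W = {0} \<union> (\<Union>j\<in>{1..}. K j)"
  using collapse_K(1)[of 1] by (auto simp: W_def)

lemma to_bouquet_0: "to_bouquet 0 = g 1"
  using index_K_W[of 0] collapse_K(1)[of 1] T_at_0[of "index_K 0" 0]
  by (auto simp: to_bouquet_def W_def)

lemma to_bouquet_K:
  assumes "1 \<le> j" "x \<in> K j"
  shows "to_bouquet x = T j 0 x"
proof (cases "x = 0")
  case True
  then show ?thesis using to_bouquet_0 T_at_0[OF assms(1), of 0] by simp
qed (use index_K[OF assms] in \<open>simp add: to_bouquet_def\<close>)

lemma to_wedge_L:
  assumes "1 \<le> j" "y \<in> L j"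
  shows "to_wedge y = \<theta>' j y"
proof (cases "y \<in> path_image g")
  case True
  then have "y = g (t j)" using L_Int_arc[OF assms(1)] assms(2) by blast
  then show ?thesis using True \<theta>'_arc_point[OF assms(1)] by (simp add: to_wedge_def)
qed (use index_L[OF assms] in \<open>simp add: to_wedge_def\<close>)

lemma wedge_homotopy_K:
  assumes j: "1 \<le> j" and x: "x \<in> K j" and s: "s \<in> {0..1}"
  shows "wedge_homotopy (s, x) = C j ((1 - s) / 2) x"
proof (cases "x = 0")
  case True
  have "C i ((1 - s) / 2) 0 = 0" if "1 \<le> i" for i
    using collapse_K(1,4,8)[OF that] s by simp
  then show ?thesis using True j index_K_W[of 0] collapse_K(1)[OF j]
    by (auto simp: wedge_homotopy_def W_def)
qed (use index_K[OF j x] in \<open>simp add: wedge_homotopy_def\<close>)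

lemma bouquet_homotopy_L:
  assumes j: "1 \<le> j" and y: "y \<in> L j" and s: "s \<in> {0..1}"
  shows "bouquet_homotopy (s, y) = T j s (\<theta>' j y)"
proof (cases "y \<in> path_image g")
  case True
  then have "y = g (t j)" using L_Int_arc[OF j] y by blast
  then show ?thesis
    using True \<theta>'_arc_point[OF j] T_at_0[OF j s] arc_param_g t_bounds[OF j]
    by (simp add: bouquet_homotopy_def)
qed (use index_L[OF j y] in \<open>simp add: bouquet_homotopy_def\<close>)

lemma continuous_on_to_bouquet: "continuous_on W to_bouquet"
proof (rule continuous_on_Union_shrinking[OF W_eq])
  show "continuous_on (K j) to_bouquet" if "j \<in> {1..}" for j
  proof -
    have j: "1 \<le> j" using that by simp
    have "continuous_on (K j) (\<lambda>x. T j 0 x)"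
      by (rule continuous_on_compose2[OF continuous_on_T[OF j], where f = "\<lambda>x. (0, x)", simplified])
        (auto intro!: continuous_intros)
    then show ?thesis by (rule continuous_on_eq) (simp add: to_bouquet_K[OF j])
  qed
  fix e :: real assume "e > 0"
  show "\<forall>\<^sub>F j in sequentially. j \<in> {1..} \<longrightarrow>
          (\<forall>x\<in>K j. \<exists>z\<in>{0}. dist x z < e \<and> dist (to_bouquet x) (to_bouquet z) < e)"
    using eventually_conj[OF eventually_K_small eventually_tail_small, OF \<open>e > 0\<close> \<open>e > 0\<close>]
  proof (rule eventually_mono, intro impI ballI)
    fix j x assume small: "(\<forall>x\<in>K j. norm x < e) \<and> (\<forall>y\<in>L j \<union> g ` {t j..1}. dist y (g 1) < e)"
      and "j \<in> {1..}" "x \<in> K j"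
    then show "\<exists>z\<in>{0}. dist x z < e \<and> dist (to_bouquet x) (to_bouquet z) < e"
      using T_in[of j 0 x] to_bouquet_K[of j x] to_bouquet_0 by auto
  qed
qed (use compact_K compact_imp_closed in auto)

lemma continuous_on_to_wedge: "continuous_on V to_wedge"
proof (rule continuous_on_Union_shrinking[OF V_def])
  show "continuous_on (path_image g) to_wedge"
    by (rule continuous_on_eq[OF continuous_on_const]) (simp add: to_wedge_def)
  show "continuous_on (L j) to_wedge" if "j \<in> {1..}" for j
    using that by (intro continuous_on_eq[OF homeomorphism_\<theta>(3)]) (auto simp: to_wedge_L)
  fix e :: real assume "e > 0"
  show "\<forall>\<^sub>F j in sequentially. j \<in> {1..} \<longrightarrow>
          (\<forall>y\<in>L j. \<exists>z\<in>path_image g. dist y z < e \<and> dist (to_wedge y) (to_wedge z) < e)"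
    using eventually_conj[OF eventually_K_small eventually_L_small, OF \<open>e > 0\<close> \<open>e > 0\<close>]
  proof (rule eventually_mono, intro impI ballI)
    fix j y assume small: "(\<forall>x\<in>K j. norm x < e) \<and> (\<forall>y\<in>L j. dist y (g (t j)) < e)"
      and j: "j \<in> {1..}" and y: "y \<in> L j"
    have "g (t j) \<in> path_image g" "to_wedge (g (t j)) = 0" "to_wedge y \<in> K j"
      using L_Int_arc[of j] j y homeomorphism_\<theta>(4)[of j] to_wedge_L[of j y] by (auto simp: to_wedge_def)
    then show "\<exists>z\<in>path_image g. dist y z < e \<and> dist (to_wedge y) (to_wedge z) < e"
      using small y by (intro bexI[of _ "g (t j)"]) auto
  qed
qed (use compact_L compact_imp_closed compact_path_image_g in auto)

lemma wedge_homotopy_0: "s \<in> {0..1} \<Longrightarrow> wedge_homotopy (s, 0) = 0"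
  using wedge_homotopy_K[OF order_refl collapse_K(1)[OF order_refl]] collapse_K(1,4,8)[OF order_refl]
  by simp

lemma continuous_on_wedge_homotopy: "continuous_on ({0..1} \<times> W) wedge_homotopy"
proof (rule continuous_on_Union_shrinking[where Z = "{0..1} \<times> {0}" and P = "\<lambda>j. {0..1} \<times> K j"])
  show "{0..1} \<times> W = {0..1} \<times> {0} \<union> (\<Union>j\<in>{1..}. {0..1} \<times> K j)" using W_eq by auto
  show "continuous_on ({0..1} \<times> {0}) wedge_homotopy"
    by (rule continuous_on_eq[OF continuous_on_const[of _ 0]]) (auto simp: wedge_homotopy_0)
  show "continuous_on ({0..1} \<times> K j) wedge_homotopy" if "j \<in> {1..}" for j
  proof -
    have j: "1 \<le> j" using that by simp
    have "continuous_on ({0..1} \<times> K j) (\<lambda>z. C j ((1 - fst z) / 2) (snd z))"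
      by (rule continuous_on_compose2[OF collapse_K(5)[OF j], where f = "\<lambda>z. ((1 - fst z) / 2, snd z)",
            simplified]) (auto intro!: continuous_intros)
    moreover have "C j ((1 - fst z) / 2) (snd z) = wedge_homotopy z" if "z \<in> {0..1} \<times> K j" for z
      using that wedge_homotopy_K[OF j, of "snd z" "fst z"] by (simp add: mem_Times_iff)
    ultimately show ?thesis by (rule continuous_on_eq)
  qed
  fix e :: real assume "e > 0"
  show "\<forall>\<^sub>F j in sequentially. j \<in> {1..} \<longrightarrow> (\<forall>z\<in>{0..1} \<times> K j. \<exists>z'\<in>{0..1} \<times> {0}.
          dist z z' < e \<and> dist (wedge_homotopy z) (wedge_homotopy z') < e)"
    using eventually_K_small[OF \<open>e > 0\<close>]
  proof (rule eventually_mono, intro impI ballI)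
    fix j and z :: "real \<times> 'a"
    assume small: "\<forall>x\<in>K j. norm x < e" and j: "j \<in> {1..}" and z: "z \<in> {0..1} \<times> K j"
    then obtain s x where sx: "z = (s, x)" "s \<in> {0..1}" "x \<in> K j" by auto
    have "wedge_homotopy (s, x) \<in> K j"
      using j sx collapse_K(7)[of j "(1 - s) / 2" x] wedge_homotopy_K[of j x s] by auto
    then show "\<exists>z'\<in>{0..1} \<times> {0}. dist z z' < e \<and> dist (wedge_homotopy z) (wedge_homotopy z') < e"
      using small sx wedge_homotopy_0 by (intro bexI[of _ "(s, 0)"]) (auto simp: dist_Pair_Pair)
  qed
qed (use compact_K in \<open>auto simp: closed_Times compact_imp_closed\<close>)

lemma bouquet_homotopy_arc:
  "y \<in> path_image g \<Longrightarrow> bouquet_homotopy (s, y) = g (1 - s * (1 - arc_param y))"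
  by (simp add: bouquet_homotopy_def)

lemma arc_param_in: "y \<in> path_image g \<Longrightarrow> arc_param y \<in> {0..1} \<and> g (arc_param y) = y"
  using homeomorphism_arc_param by (auto simp: homeomorphism_def)

lemma arc_homotopy_param:
  assumes "s \<in> {0..1}" "y \<in> path_image g"
  shows "1 - s * (1 - arc_param y) \<in> {arc_param y..1}"
proof -
  have "arc_param y \<in> {0..1}" using arc_param_in[OF assms(2)] by simp
  then have "s * (1 - arc_param y) \<le> 1 - arc_param y" "0 \<le> s * (1 - arc_param y)"
    using assms(1) by (simp_all add: mult_left_le_one_le)
  then show ?thesis by simp
qed

lemma continuous_on_bouquet_homotopy: "continuous_on ({0..1} \<times> V) bouquet_homotopy"
proof (rule continuous_on_Union_shrinking[where Z = "{0..1} \<times> path_image g"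
      and P = "\<lambda>j. {0..1} \<times> L j"])
  show "{0..1} \<times> V = {0..1} \<times> path_image g \<union> (\<Union>j\<in>{1..}. {0..1} \<times> L j)"
    by (auto simp: V_def)
  have cont_param: "continuous_on (path_image g) arc_param"
    using homeomorphism_arc_param by (simp add: homeomorphism_def)
  have "continuous_on ({0..1} \<times> path_image g) (\<lambda>z. g (1 - fst z * (1 - arc_param (snd z))))"
  proof (rule continuous_on_compose2[OF continuous_on_g])
    show "continuous_on ({0..1} \<times> path_image g) (\<lambda>z. 1 - fst z * (1 - arc_param (snd z)))"
      by (intro continuous_intros continuous_on_compose2[OF cont_param]) auto
    show "(\<lambda>z. 1 - fst z * (1 - arc_param (snd z))) ` ({0..1} \<times> path_image g) \<subseteq> {0..1}"
    proof (rule image_subsetI)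
      fix z :: "real \<times> 'a" assume "z \<in> {0..1} \<times> path_image g"
      then have "fst z \<in> {0..1}" "snd z \<in> path_image g" by auto
      then show "1 - fst z * (1 - arc_param (snd z)) \<in> {0..1}"
        using arc_homotopy_param[of "fst z" "snd z"] arc_param_in[of "snd z"] by auto
    qed
  qed
  then show "continuous_on ({0..1} \<times> path_image g) bouquet_homotopy"
    by (rule continuous_on_eq) (auto simp: bouquet_homotopy_arc)
  show "continuous_on ({0..1} \<times> L j) bouquet_homotopy" if "j \<in> {1..}" for j
  proof -
    have j: "1 \<le> j" using that by simp
    have "continuous_on ({0..1::real} \<times> L j) (\<lambda>z. (fst z, \<theta>' j (snd z)))"
      by (intro continuous_intros continuous_on_compose2[OF homeomorphism_\<theta>(3)[OF j]]) auto
    moreover have "(\<lambda>z. (fst z, \<theta>' j (snd z))) ` ({0..1} \<times> L j) \<subseteq> {0..1} \<times> K j"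
      using homeomorphism_\<theta>(4)[OF j] by auto
    ultimately have "continuous_on ({0..1} \<times> L j) (\<lambda>z. T j (fst z) (\<theta>' j (snd z)))"
      using continuous_on_compose2[OF continuous_on_T[OF j]] by fastforce
    moreover have "T j (fst z) (\<theta>' j (snd z)) = bouquet_homotopy z" if "z \<in> {0..1} \<times> L j" for z
      using that bouquet_homotopy_L[OF j, of "snd z" "fst z"] by (simp add: mem_Times_iff)
    ultimately show ?thesis by (rule continuous_on_eq)
  qed
  fix e :: real assume "e > 0"
  then have "e / 2 > 0" by simp
  show "\<forall>\<^sub>F j in sequentially. j \<in> {1..} \<longrightarrow> (\<forall>z\<in>{0..1} \<times> L j. \<exists>z'\<in>{0..1} \<times> path_image g.
          dist z z' < e \<and> dist (bouquet_homotopy z) (bouquet_homotopy z') < e)"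
    using eventually_conj[OF eventually_L_small eventually_tail_small, OF \<open>e > 0\<close> \<open>e / 2 > 0\<close>]
  proof (rule eventually_mono, intro impI ballI)
    fix j and z :: "real \<times> 'a"
    assume small: "(\<forall>y\<in>L j. dist y (g (t j)) < e) \<and> (\<forall>y\<in>L j \<union> g ` {t j..1}. dist y (g 1) < e / 2)"
      and j: "j \<in> {1..}" and z: "z \<in> {0..1} \<times> L j"
    then obtain s y where sy: "z = (s, y)" "s \<in> {0..1}" "y \<in> L j" by auto
    have j1: "1 \<le> j" using j by simp
    have arc_pt: "g (t j) \<in> path_image g" using L_Int_arc[OF j1] by blast
    have "bouquet_homotopy (s, y) \<in> L j \<union> g ` {t j..1}"
      using bouquet_homotopy_L[OF j1 sy(3,2)] T_in[OF j1 sy(2) homeomorphism_\<theta>(4)[OF j1 sy(3)]] by simp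
    moreover have "bouquet_homotopy (s, g (t j)) \<in> g ` {t j..1}"
      using bouquet_homotopy_arc[OF arc_pt] arc_homotopy_param[OF sy(2) arc_pt]
        arc_param_g t_bounds[OF j1] by auto
    ultimately have "dist (bouquet_homotopy (s, y)) (g 1) < e / 2"
      "dist (bouquet_homotopy (s, g (t j))) (g 1) < e / 2"
      using small by auto
    then have "dist (bouquet_homotopy (s, y)) (bouquet_homotopy (s, g (t j))) < e"
      using dist_triangle_half_l by blast
    then show "\<exists>z'\<in>{0..1} \<times> path_image g. dist z z' < e \<and> dist (bouquet_homotopy z) (bouquet_homotopy z') < e"
      using small sy arc_pt by (intro bexI[of _ "(s, g (t j))"]) (auto simp: dist_Pair_Pair)
  qed
qed (use compact_L compact_path_image_g in \<open>auto simp: closed_Times compact_imp_closed\<close>)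

lemma tail_subset_V: "1 \<le> j \<Longrightarrow> L j \<union> g ` {t j..1} \<subseteq> V"
  using arc_tail_subset by (auto simp: V_def)

lemma V_cases:
  assumes "y \<in> V"
  obtains "y \<in> path_image g" | j where "1 \<le> j" "y \<in> L j" "y \<notin> path_image g"
  using assms by (auto simp: V_def)

lemma to_bouquet_image: "to_bouquet ` W \<subseteq> V"
proof (rule image_subsetI)
  fix x assume "x \<in> W"
  then have "1 \<le> index_K x" "x \<in> K (index_K x)" using index_K_W by auto
  then show "to_bouquet x \<in> V"
    using T_in[of "index_K x" 0 x] tail_subset_V[of "index_K x"] by (auto simp: to_bouquet_def)
qed

lemma to_wedge_image: "to_wedge ` V \<subseteq> W"
proof (rule image_subsetI)
  fix y assume "y \<in> V"
  then show "to_wedge y \<in> W"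
  proof (cases rule: V_cases)
    case 1
    then show ?thesis using collapse_K(1)[of 1] by (auto simp: to_wedge_def W_def)
  next
    case (2 j)
    then show ?thesis using to_wedge_L[of j y] homeomorphism_\<theta>(4)[of j y] by (auto simp: W_def)
  qed
qed

lemma wedge_homotopy_image: "wedge_homotopy ` ({0..1} \<times> W) \<subseteq> W"
proof (rule image_subsetI)
  fix z :: "real \<times> 'a" assume "z \<in> {0..1} \<times> W"
  then obtain s x where z: "z = (s, x)" "s \<in> {0..1}" "x \<in> W" by auto
  then have "1 \<le> index_K x" "x \<in> K (index_K x)" using index_K_W by auto
  then show "wedge_homotopy z \<in> W"
    using z wedge_homotopy_K[of "index_K x" x s] collapse_K(7)[of "index_K x" "(1 - s) / 2" x]
    by (auto simp: W_def)
qed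

lemma bouquet_homotopy_image: "bouquet_homotopy ` ({0..1} \<times> V) \<subseteq> V"
proof (rule image_subsetI)
  fix z :: "real \<times> 'a" assume "z \<in> {0..1} \<times> V"
  then obtain s y where z: "z = (s, y)" "s \<in> {0..1}" "y \<in> V" by auto
  from z(3) show "bouquet_homotopy z \<in> V"
  proof (cases rule: V_cases)
    case 1
    then have "1 - s * (1 - arc_param y) \<in> {0..1}"
      using arc_homotopy_param[OF z(2) 1] arc_param_in[OF 1] by auto
    then show ?thesis
      using z bouquet_homotopy_arc[OF 1] by (auto simp: V_def path_image_g)
  next
    case (2 j)
    then show ?thesis
      using z bouquet_homotopy_L[of j y s] T_in[of j s "\<theta>' j y"] homeomorphism_\<theta>(4)[of j y]
        tail_subset_V[of j] by auto
  qed
qed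

lemma wedge_homotopy_start:
  assumes "x \<in> W"
  shows "wedge_homotopy (0, x) = to_wedge (to_bouquet x)"
proof -
  define j where "j = index_K x"
  have j: "1 \<le> j" "x \<in> K j" using index_K_W[OF assms] by (auto simp: j_def)
  have start: "wedge_homotopy (0, x) = C j (1/2) x" using wedge_homotopy_K[OF j] by simp
  show ?thesis
  proof (cases "\<rho> j x < 1/2")
    case True
    then have "to_bouquet x \<in> path_image g"
      using to_bouquet_K[OF j] T_in[OF j(1) _ j(2), of 0] arc_segment_param[OF j(1), of 0 "\<rho> j x"]
        collapse_K(3)[OF j] arc_tail_subset[OF j(1)] by (auto simp: T_def)
    moreover have "C j (1/2) x = 0" using True collapse_K(8)[OF j(1) _ j(2)] by simp
    ultimately show ?thesis using start by (simp add: to_wedge_def)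
  next
    case False
    then have "to_bouquet x = \<theta> j (C j (1/2) x)" using to_bouquet_K[OF j] by (simp add: T_def)
    moreover have "C j (1/2) x \<in> K j" using collapse_K(7)[OF j(1) _ j(2)] by simp
    ultimately show ?thesis
      using start to_wedge_L[OF j(1)] homeomorphism_\<theta>(2,5)[OF j(1)] by simp
  qed
qed

lemma wedge_homotopy_end: "x \<in> W \<Longrightarrow> wedge_homotopy (1, x) = x"
  using index_K_W wedge_homotopy_K collapse_K(6) by fastforce

lemma bouquet_homotopy_start:
  assumes "y \<in> V"
  shows "bouquet_homotopy (0, y) = to_bouquet (to_wedge y)"
  using assms
proof (cases rule: V_cases)
  case 1
  then show ?thesis by (simp add: bouquet_homotopy_arc to_wedge_def to_bouquet_0)
next
  case (2 j)
  then show ?thesis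
    using bouquet_homotopy_L[of j y 0] to_wedge_L[of j y] to_bouquet_K[of j "\<theta>' j y"]
      homeomorphism_\<theta>(4)[of j y] by simp
qed

lemma bouquet_homotopy_end:
  assumes "y \<in> V"
  shows "bouquet_homotopy (1, y) = y"
  using assms
proof (cases rule: V_cases)
  case 1
  then show ?thesis using arc_param_in by (simp add: bouquet_homotopy_arc)
next
  case (2 j)
  then show ?thesis
    using bouquet_homotopy_L[of j y 1] T_1[of j "\<theta>' j y"] homeomorphism_\<theta>(4,6)[of j y] by simp
qed

theorem homotopy_eqv: "W homotopy_eqv V"
  unfolding homotopy_equivalent_space_def
proof (intro exI conjI)
  show "continuous_map (top_of_set W) (top_of_set V) to_bouquet"
    using continuous_on_to_bouquet to_bouquet_image by (simp add: image_subset_iff Pi_iff)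
  show "continuous_map (top_of_set V) (top_of_set W) to_wedge"
    using continuous_on_to_wedge to_wedge_image by (simp add: image_subset_iff Pi_iff)
  show "homotopic_with (\<lambda>x. True) (top_of_set W) (top_of_set W) (to_wedge \<circ> to_bouquet) id"
    by (rule homotopic_with_canonI[OF continuous_on_wedge_homotopy wedge_homotopy_image])
      (simp_all add: wedge_homotopy_start wedge_homotopy_end)
  show "homotopic_with (\<lambda>x. True) (top_of_set V) (top_of_set V) (to_bouquet \<circ> to_wedge) id"
    by (rule homotopic_with_canonI[OF continuous_on_bouquet_homotopy bouquet_homotopy_image])
      (simp_all add: bouquet_homotopy_start bouquet_homotopy_end)
qed

end

lemma compact_wedge_homotopy_eqv_arc_bouquet:
  fixes F :: "nat \<Rightarrow> 'a::euclidean_space set \<Rightarrow> bool"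
  assumes wedge: "compact_wedge F W" and bouquet: "arc_bouquet F V"
    and factor: "\<And>j X. 1 \<le> j \<Longrightarrow> F j X \<Longrightarrow>
                   compact X \<and> topologically_homogeneous X \<and> radially_collapsible X"
    and same_factor: "\<And>j X Y. 1 \<le> j \<Longrightarrow> F j X \<Longrightarrow> F j Y \<Longrightarrow> X homeomorphic Y"
  shows "W homotopy_eqv V"
proof -
  obtain K where K: "\<And>j. 1 \<le> j \<Longrightarrow> F j (K j) \<and> 0 \<in> K j"
    "\<And>i j. 1 \<le> i \<Longrightarrow> 1 \<le> j \<Longrightarrow> i \<noteq> j \<Longrightarrow> K i \<inter> K j = {0}"
    "(\<lambda>j. diameter (K j)) \<longlonglongrightarrow> 0" "W = (\<Union>j\<in>{1..}. K j)"
    using wedge unfolding compact_wedge_def by blast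
  obtain g t L where gtL: "arc g" "t 1 = 0" "\<And>i. 1 \<le> i \<Longrightarrow> t i < t (Suc i)" "t \<longlonglongrightarrow> 1"
    "\<And>j. 1 \<le> j \<Longrightarrow> F j (L j) \<and> L j \<inter> path_image g = {g (t j)}"
    "\<And>i j. 1 \<le> i \<Longrightarrow> 1 \<le> j \<Longrightarrow> i \<noteq> j \<Longrightarrow> L i \<inter> L j = {}"
    "(\<lambda>j. diameter (L j)) \<longlonglongrightarrow> 0" "V = path_image g \<union> (\<Union>j\<in>{1..}. L j)"
    using bouquet unfolding arc_bouquet_def by blast
  have "\<exists>\<theta> \<theta>'. homeomorphism (K j) (L j) \<theta> \<theta>' \<and> \<theta> 0 = g (t j)" if j: "1 \<le> j" for j
  proof -
    have "K j homeomorphic L j" "topologically_homogeneous (L j)" "0 \<in> K j" "g (t j) \<in> L j"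
      using same_factor factor K(1) gtL(5) j by blast+
    then show ?thesis using homeomorphism_moving_point_to_homogeneous by metis
  qed
  then obtain \<theta> \<theta>' where \<theta>: "\<And>j. 1 \<le> j \<Longrightarrow> homeomorphism (K j) (L j) (\<theta> j) (\<theta>' j) \<and> \<theta> j 0 = g (t j)"
    by metis
  have "\<exists>\<rho> C. radial_collapse (K j) 0 \<rho> C" if "1 \<le> j" for j
    using factor K(1) that unfolding radially_collapsible_def by blast
  then obtain \<rho> C where \<rho>C: "\<And>j. 1 \<le> j \<Longrightarrow> radial_collapse (K j) 0 (\<rho> j) (C j)"
    by metis
  interpret wedge_and_bouquet K L g t \<theta> \<theta>' \<rho> C
    using K gtL \<theta> \<rho>C factor by unfold_locales auto
  show ?thesis using homotopy_eqv K(4) gtL(8) by (simp add: W_def V_def)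
qed

theorem proposition3p9:
  fixes n :: nat
    and S0 S1 WS0 WS1 :: "'a::euclidean_space set"
  assumes "n \<ge> 1"
    and "DIM('a) = 2 * n + 2"
    and "DIM('b::euclidean_space) = n + 1"
    and "compact_wedge (\<lambda>j X. X homeomorphic (sphere (0::'b) 1 \<times> sphere (0::'b) 1)) S0"
    and "compact_wedge (\<lambda>j X. if j = 1 then X homeomorphic sphere (0::'b) 1
                              else X homeomorphic (sphere (0::'b) 1 \<times> sphere (0::'b) 1)) S1"
    and "arc_bouquet (\<lambda>j X. X homeomorphic (sphere (0::'b) 1 \<times> sphere (0::'b) 1)) WS0"
    and "arc_bouquet (\<lambda>j X. if j = 1 then X homeomorphic sphere (0::'b) 1
                             else X homeomorphic (sphere (0::'b) 1 \<times> sphere (0::'b) 1)) WS1"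
  shows "S0 homotopy_eqv WS0 \<and> S1 homotopy_eqv WS1"
proof -
  let ?S = "sphere (0::'b) 1"
  have sphere: "compact X \<and> topologically_homogeneous X \<and> radially_collapsible X"
    if "X homeomorphic ?S" for X :: "'a set"
    by (rule homeomorphic_compact_homogeneous_collapsible[OF that compact_sphere
          topologically_homogeneous_sphere radially_collapsible_sphere])
  have torus: "compact X \<and> topologically_homogeneous X \<and> radially_collapsible X"
    if "X homeomorphic ?S \<times> ?S" for X :: "'a set"
    by (rule homeomorphic_compact_homogeneous_collapsible[OF that
          compact_Times[OF compact_sphere compact_sphere]
          topologically_homogeneous_Times[OF topologically_homogeneous_sphere topologically_homogeneous_sphere]
          radially_collapsible_sphere_Times])
  have "S0 homotopy_eqv WS0"
    by (rule compact_wedge_homotopy_eqv_arc_bouquet[OF assms(4,6) torus homeomorphic_to_same])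
  moreover have "S1 homotopy_eqv WS1"
    by (rule compact_wedge_homotopy_eqv_arc_bouquet[OF assms(5,7)])
      (use sphere torus homeomorphic_to_same[where M = ?S] homeomorphic_to_same[where M = "?S \<times> ?S"]
        in \<open>auto split: if_splits\<close>)
  ultimately show ?thesis ..
qed

end
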